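(* Assume the setting of the model $Y_i = Z_i^T \pi^* + D_i \beta^* + \epsilon_i$, $E(\epsilon_i \mid Z_i)=0$, with $B^* = \{j : \pi^*_j \ne 0\}$, an integer $U$ with $1 \le U \le L-1$ (so that every $B$ with $c(B)=U-1$ has $c(B^C) \ge 2$), and $c(B^* ) < U$. Let $\alpha_1, \alpha_2 \in (0,1)$ with $\alpha = \alpha_1 + \alpha_2 < 1$. For every $\beta_0$ and $B \subseteq \{1,\ldots,L\}$ let $T(\beta_0,B)$ be a test statistic with critical value $q^T_{1-\alpha_2}(B)$ such that whenever $B^* \subseteq B$ and $\beta^*=\beta_0$, $\mathrm{pr}\{T(\beta_0,B) > q^T_{1-\alpha_2}(B)\} \le \alpha_2$, and let $C_{1-\alpha_2}(Y,D,Z,B) = \{\beta_0 : T(\beta_0,B) \le q^T_{1-\alpha_2}(B)\}$. For every $B$ with $c(B^C) \ge 2$ let $S(B)$ be a pretest statistic for the null hypothesis $\pi^*_{B^C} = 0$ with critical value $q^S_{1-\alpha_1}(B)$ such that whenever $\pi^*_{B^C} = 0$ (equivalently $B^* \subseteq B$), $\mathrm{pr}\{S(B) > q^S_{1-\alpha_1}(B)\} \le \alpha_1$. Define \[ C'_{1-\alpha}(Y,D,Z) = \bigcup \big\{ C_{1-\alpha_2}(Y,D,Z,B) : B \subseteq \{1,\ldots,L\},\ c(B) = U-1,\ S(B) \le q^S_{1-\alpha_1}(B) \big\}. \] Then $\mathrm{pr}\{\beta^* \in C'_{1-\alpha}(Y,D,Z)\} \ge 1-\alpha$.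
   Context: $Y=(Y_1,\ldots,Y_n)$, $D=(D_1,\ldots,D_n)$, $Z$ is the $n\times L$ matrix with rows $Z_i^T$, and $\pi^*\in\mathbb{R}^L$, $\beta^*\in\mathbb{R}$ are unknown. For $A \subseteq \{1,\ldots,L\}$, $c(A)$ is its cardinality, $A^C$ its complement, and for a vector $\pi \in \mathbb{R}^L$, $\pi_A$ is the subvector of entries indexed by $A$. *)

theory Defs
  imports "HOL-Probability.Probability"
begin

text \<open>Data: Y, D are indexed by i in {1..n}; Z is indexed by i in {1..n}, j in {1..L}.\<close>
type_synonym data = "(nat \<Rightarrow> real) \<times> (nat \<Rightarrow> real) \<times> (nat \<Rightarrow> nat \<Rightarrow> real)"

definition supp_pi :: "nat \<Rightarrow> (nat \<Rightarrow> real) \<Rightarrow> nat set" where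
  "supp_pi L \<pi> = {j \<in> {1..L}. \<pi> j \<noteq> 0}"

text \<open>E(eps_i | Z_i) = 0, by the defining property of conditional expectation:
  eps_i integrable and its integral over every event generated by Z_i vanishes.\<close>
definition cond_mean_zero :: "'a measure \<Rightarrow> nat \<Rightarrow> ('a \<Rightarrow> real) \<Rightarrow> ('a \<Rightarrow> nat \<Rightarrow> real) \<Rightarrow> bool" where
  "cond_mean_zero M L e Zi \<longleftrightarrow>
     integrable M e \<and>
     (\<lambda>\<omega>. restrict (Zi \<omega>) {1..L}) \<in> M \<rightarrow>\<^sub>M (\<Pi>\<^sub>M j\<in>{1..L}. borel) \<and>
     (\<forall>A \<in> sets (\<Pi>\<^sub>M j\<in>{1..L}. (borel :: real measure)).
        (\<integral>\<omega>. indicator A (restrict (Zi \<omega>) {1..L}) * e \<omega> \<partial>M) = 0)"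

definition conf_set :: "(real \<Rightarrow> nat set \<Rightarrow> data \<Rightarrow> real) \<Rightarrow> (nat set \<Rightarrow> real)
    \<Rightarrow> data \<Rightarrow> nat set \<Rightarrow> real set" where
  "conf_set T qT x B = {\<beta>0. T \<beta>0 B x \<le> qT B}"

definition conf_union :: "nat \<Rightarrow> nat \<Rightarrow> (real \<Rightarrow> nat set \<Rightarrow> data \<Rightarrow> real) \<Rightarrow> (nat set \<Rightarrow> real)
    \<Rightarrow> (nat set \<Rightarrow> data \<Rightarrow> real) \<Rightarrow> (nat set \<Rightarrow> real) \<Rightarrow> data \<Rightarrow> real set" where
  "conf_union L U T qT S qS x =
     \<Union> {conf_set T qT x B | B. B \<subseteq> {1..L} \<and> card B = U - 1 \<and> S B x \<le> qS B}"

end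

theory Submission
  imports Defs
begin

text \<open>Extend the support of \<open>\<pi>*\<close> to a set \<open>B\<close> of size \<open>U - 1\<close>. Both the pretest \<open>S(B)\<close> and the
  test \<open>T(\<beta>*, B)\<close> are then valid, and on the event that neither rejects, \<open>\<beta>*\<close> lies in the union
  \<open>C'\<close>; the union bound gives coverage at least \<open>1 - (\<alpha>\<^sub>1 + \<alpha>\<^sub>2)\<close>.\<close>

lemma supp_pi_subset: "supp_pi L \<pi> \<subseteq> {1..L}"
  unfolding supp_pi_def by auto

lemma supp_pi_subset_iff: "B \<subseteq> {1..L} \<Longrightarrow> supp_pi L \<pi> \<subseteq> B \<longleftrightarrow> (\<forall>j \<in> {1..L} - B. \<pi> j = 0)"
  unfolding supp_pi_def by auto

lemma mem_conf_union_iff: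
  "\<beta> \<in> conf_union L U T qT S qS x \<longleftrightarrow>
     (\<exists>B. B \<subseteq> {1..L} \<and> card B = U - 1 \<and> S B x \<le> qS B \<and> T \<beta> B x \<le> qT B)"
  unfolding conf_union_def conf_set_def by auto

lemma conf_union_event_measurable:
  assumes "\<And>B. B \<subseteq> {1..L} \<Longrightarrow> (\<lambda>\<omega>. S B (x \<omega>)) \<in> borel_measurable M"
    and "\<And>B. B \<subseteq> {1..L} \<Longrightarrow> (\<lambda>\<omega>. T \<beta> B (x \<omega>)) \<in> borel_measurable M"
  shows "{\<omega> \<in> space M. \<beta> \<in> conf_union L U T qT S qS (x \<omega>)} \<in> sets M"
proof -
  have "{\<omega> \<in> space M. \<beta> \<in> conf_union L U T qT S qS (x \<omega>)} =
      (\<Union>B \<in> {B. B \<subseteq> {1..L} \<and> card B = U - 1}.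
         {\<omega> \<in> space M. S B (x \<omega>) \<le> qS B \<and> T \<beta> B (x \<omega>) \<le> qT B})"
    by (auto simp: mem_conf_union_iff)
  also have "\<dots> \<in> sets M"
  proof (intro sets.finite_UN)
    fix B assume "B \<in> {B. B \<subseteq> {1..L} \<and> card B = U - 1}"
    then have "B \<subseteq> {1..L}" by simp
    with assms show "{\<omega> \<in> space M. S B (x \<omega>) \<le> qS B \<and> T \<beta> B (x \<omega>) \<le> qT B} \<in> sets M"
      by measurable
  qed simp
  finally show ?thesis .
qed

lemma (in prob_space) prob_ge_compl_union_bound:
  assumes "A \<in> events" "B \<in> events" "G \<in> events" "space M - (A \<union> B) \<subseteq> G"
    and "prob A \<le> a" "prob B \<le> b"
  shows "1 - (a + b) \<le> prob G"
proof -
  have "1 - (a + b) \<le> 1 - prob (A \<union> B)"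
    using measure_Un_le[OF assms(1,2)] assms(5,6) by linarith
  also have "\<dots> = prob (space M - (A \<union> B))"
    using assms(1,2) by (simp add: prob_compl)
  also have "\<dots> \<le> prob G"
    using assms(4,3) by (rule finite_measure_mono)
  finally show ?thesis .
qed

theorem theorem2:
  fixes M :: "'a measure"
    and n L U :: nat
    and Y D eps :: "'a \<Rightarrow> nat \<Rightarrow> real"
    and Z :: "'a \<Rightarrow> nat \<Rightarrow> nat \<Rightarrow> real"
    and \<pi>s :: "nat \<Rightarrow> real" and \<beta>s :: real
    and \<alpha>1 \<alpha>2 :: real
    and T :: "real \<Rightarrow> nat set \<Rightarrow> data \<Rightarrow> real" and qT :: "nat set \<Rightarrow> real"
    and S :: "nat set \<Rightarrow> data \<Rightarrow> real" and qS :: "nat set \<Rightarrow> real"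
  assumes "prob_space M"
    and model: "\<And>\<omega> i. \<omega> \<in> space M \<Longrightarrow> i \<in> {1..n} \<Longrightarrow>
                 Y \<omega> i = (\<Sum>j\<in>{1..L}. Z \<omega> i j * \<pi>s j) + D \<omega> i * \<beta>s + eps \<omega> i"
    and exog: "\<And>i. i \<in> {1..n} \<Longrightarrow> cond_mean_zero M L (\<lambda>\<omega>. eps \<omega> i) (\<lambda>\<omega>. Z \<omega> i)"
    and U: "1 \<le> U" "U \<le> L - 1"
    and sparse: "card (supp_pi L \<pi>s) < U"
    and alpha: "0 < \<alpha>1" "\<alpha>1 < 1" "0 < \<alpha>2" "\<alpha>2 < 1" "\<alpha>1 + \<alpha>2 < 1"
    and T_meas: "\<And>\<beta>0 B. B \<subseteq> {1..L} \<Longrightarrow>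
                   (\<lambda>\<omega>. T \<beta>0 B (Y \<omega>, D \<omega>, Z \<omega>)) \<in> borel_measurable M"
    and S_meas: "\<And>B. B \<subseteq> {1..L} \<Longrightarrow>
                   (\<lambda>\<omega>. S B (Y \<omega>, D \<omega>, Z \<omega>)) \<in> borel_measurable M"
    and T_valid: "\<And>\<beta>0 B. B \<subseteq> {1..L} \<Longrightarrow> supp_pi L \<pi>s \<subseteq> B \<Longrightarrow> \<beta>s = \<beta>0 \<Longrightarrow>
        measure M {\<omega> \<in> space M. T \<beta>0 B (Y \<omega>, D \<omega>, Z \<omega>) > qT B} \<le> \<alpha>2"
    and S_valid: "\<And>B. B \<subseteq> {1..L} \<Longrightarrow> card ({1..L} - B) \<ge> 2 \<Longrightarrow>
        (\<forall>j \<in> {1..L} - B. \<pi>s j = 0) \<Longrightarrow>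
        measure M {\<omega> \<in> space M. S B (Y \<omega>, D \<omega>, Z \<omega>) > qS B} \<le> \<alpha>1"
  shows "measure M {\<omega> \<in> space M. \<beta>s \<in> conf_union L U T qT S qS (Y \<omega>, D \<omega>, Z \<omega>)}
           \<ge> 1 - (\<alpha>1 + \<alpha>2)"
proof -
  interpret prob_space M by fact
  let ?x = "\<lambda>\<omega>. (Y \<omega>, D \<omega>, Z \<omega>)"
  have "card (supp_pi L \<pi>s) \<le> U - 1" "U - 1 \<le> card {1..L}"
    using sparse U by auto
  then obtain B where supp_B: "supp_pi L \<pi>s \<subseteq> B" and B: "B \<subseteq> {1..L}" "card B = U - 1"
    using exists_subset_between[OF _ _ supp_pi_subset finite_atLeastAtMost] by blast
  have "card ({1..L} - B) \<ge> 2"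
    using B U by (simp add: card_Diff_subset finite_subset)
  then have S_rej: "prob {\<omega> \<in> space M. S B (?x \<omega>) > qS B} \<le> \<alpha>1"
    using S_valid[OF B(1)] supp_B supp_pi_subset_iff[OF B(1)] by blast
  have T_rej: "prob {\<omega> \<in> space M. T \<beta>s B (?x \<omega>) > qT B} \<le> \<alpha>2"
    using T_valid[OF B(1) supp_B] by blast
  have "{\<omega> \<in> space M. \<beta>s \<in> conf_union L U T qT S qS (?x \<omega>)} \<in> events"
    using S_meas T_meas by (rule conf_union_event_measurable)
  moreover have "space M - ({\<omega> \<in> space M. S B (?x \<omega>) > qS B} \<union>
      {\<omega> \<in> space M. T \<beta>s B (?x \<omega>) > qT B}) \<subseteq>
      {\<omega> \<in> space M. \<beta>s \<in> conf_union L U T qT S qS (?x \<omega>)}"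
    using B by (auto simp: mem_conf_union_iff not_less)
  moreover have "{\<omega> \<in> space M. S B (?x \<omega>) > qS B} \<in> events"
    "{\<omega> \<in> space M. T \<beta>s B (?x \<omega>) > qT B} \<in> events"
    using S_meas[OF B(1)] T_meas[OF B(1)] by measurable
  ultimately show ?thesis
    using S_rej T_rej by (intro prob_ge_compl_union_bound)
qed

end
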